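(* Let $\vartheta_1$ be the random Fibonacci substitution, let $p\ge 0$ and let $u$ be a finite word over $\{a,b\}$. If either of the sets $\vartheta_1^p(a)\,u\,ab$ or $\vartheta_1^p(a)\,u\,ba$ contains a $\vartheta_1$-legal word, then both sets $\vartheta_1^p(a)\,\vartheta_1(u)\,ab$ and $\vartheta_1^p(a)\,\vartheta_1(u)\,\vartheta_1(b)\,ba$ contain $\vartheta_1$-legal words.
   Context: The random Fibonacci substitution is $\vartheta_1\colon a\mapsto\{ab,ba\},\ b\mapsto\{a\}$, extended to words by set concatenation $\vartheta_1(w_1\cdots w_k)=\vartheta_1(w_1)\cdots\vartheta_1(w_k)$ (with $AB=\{xy\mid x\in A,y\in B\}$, a single word being identified with the singleton set) and to sets of words by unions; $\vartheta_1^p$ is the $p$-fold iterate ($\vartheta_1^0(a)=\{a\}$). A word is $\vartheta_1$-legal if it is a subword of some element of $\vartheta_1^k(x)$ for some $k\ge0$ and letter $x$. *)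

theory Defs
  imports Main "HOL-Library.Sublist"
begin

datatype letter = a | b

type_synonym word = "letter list"

definition setcat :: "word set \<Rightarrow> word set \<Rightarrow> word set" where
  "setcat A B = {x @ y | x y. x \<in> A \<and> y \<in> B}"

fun theta_letter :: "letter \<Rightarrow> word set" where
  "theta_letter a = {[a, b], [b, a]}"
| "theta_letter b = {[a]}"

fun theta_word :: "word \<Rightarrow> word set" where
  "theta_word [] = {[]}"
| "theta_word (x # xs) = setcat (theta_letter x) (theta_word xs)"

definition theta_set :: "word set \<Rightarrow> word set" where
  "theta_set S = (\<Union>w\<in>S. theta_word w)"

definition theta_pow :: "nat \<Rightarrow> word set \<Rightarrow> word set" where
  "theta_pow p S = (theta_set ^^ p) S"

definition legal :: "word \<Rightarrow> bool" where
  "legal w \<longleftrightarrow> (\<exists>k x. \<exists>v \<in> theta_pow k {[x]}. sublist w v)"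

end

theory Submission
  imports Defs
begin

text \<open>Let \<open>v \<in> \<vartheta>\<^sup>p(a)\<close> with \<open>v u e\<close> legal, \<open>e \<in> {ab, ba}\<close>. Images of legal words are
legal, and \<open>\<vartheta>(e)\<close> contains \<open>aba\<close> in both cases. Since
\<open>\<vartheta>\<^sup>p\<^sup>+\<^sup>1(a) = \<vartheta>\<^sup>p(a)\<vartheta>\<^sup>p(b) \<union> \<vartheta>\<^sup>p(b)\<vartheta>\<^sup>p(a)\<close> and \<open>\<vartheta>\<^sup>p\<^sup>+\<^sup>1(b) = \<vartheta>\<^sup>p(a)\<close>, an induction on \<open>p\<close> shows
that \<open>\<vartheta>(v)\<close> contains a word \<open>z' z\<close> with \<open>z \<in> \<vartheta>\<^sup>p(a)\<close>. So \<open>z' z x aba\<close> is legal for some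
\<open>x \<in> \<vartheta>(u)\<close>, and its subwords \<open>z x ab\<close> and \<open>z x a ba\<close>, with \<open>a \<in> \<vartheta>(b)\<close>, are the required
legal words.\<close>

lemma setcat_memI: "x \<in> A \<Longrightarrow> y \<in> B \<Longrightarrow> x @ y \<in> setcat A B"
  unfolding setcat_def by blast

lemma setcat_assoc: "setcat A (setcat B C) = setcat (setcat A B) C"
  unfolding setcat_def by (auto, metis append.assoc, metis append.assoc)

lemma theta_word_append: "theta_word (xs @ ys) = setcat (theta_word xs) (theta_word ys)"
proof (induction xs)
  case Nil
  then show ?case by (auto simp: setcat_def)
next
  case (Cons x xs)
  then show ?case by (simp add: setcat_assoc)
qed

lemma ex_in_theta_word: "\<exists>y. y \<in> theta_word v"
proof (induction v)
  case Nil
  then show ?case by auto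
next
  case (Cons x v)
  then obtain y where "y \<in> theta_word v" by auto
  moreover obtain z where "z \<in> theta_letter x" by (cases x) auto
  ultimately show ?case by (auto intro: setcat_memI)
qed

lemma theta_set_setcat: "theta_set (setcat A B) = setcat (theta_set A) (theta_set B)"
proof
  show "theta_set (setcat A B) \<subseteq> setcat (theta_set A) (theta_set B)"
  proof
    fix y assume "y \<in> theta_set (setcat A B)"
    then obtain x z where "x \<in> A" "z \<in> B" "y \<in> theta_word (x @ z)"
      unfolding theta_set_def setcat_def by blast
    then show "y \<in> setcat (theta_set A) (theta_set B)"
      unfolding theta_set_def theta_word_append setcat_def by blast
  qed
next
  show "setcat (theta_set A) (theta_set B) \<subseteq> theta_set (setcat A B)"
  proof
    fix y assume "y \<in> setcat (theta_set A) (theta_set B)"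
    then obtain x z where "x \<in> A" "z \<in> B" "y \<in> theta_word (x @ z)"
      unfolding theta_set_def setcat_def theta_word_append by blast
    then show "y \<in> theta_set (setcat A B)"
      unfolding theta_set_def by (blast intro: setcat_memI)
  qed
qed

lemma theta_set_Un: "theta_set (A \<union> B) = theta_set A \<union> theta_set B"
  unfolding theta_set_def by auto

lemma theta_pow_Suc: "theta_pow (Suc p) S = theta_set (theta_pow p S)"
  unfolding theta_pow_def by simp

lemma theta_pow_Suc_right: "theta_pow (Suc p) S = theta_pow p (theta_set S)"
  unfolding theta_pow_def by (simp add: funpow_Suc_right del: funpow.simps)

lemma theta_pow_SucI: "v \<in> theta_pow p S \<Longrightarrow> y \<in> theta_word v \<Longrightarrow> y \<in> theta_pow (Suc p) S"
  by (auto simp: theta_pow_Suc theta_set_def)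

lemma theta_pow_setcat: "theta_pow p (setcat A B) = setcat (theta_pow p A) (theta_pow p B)"
  by (induction p) (simp_all add: theta_pow_def theta_pow_Suc[unfolded theta_pow_def] theta_set_setcat)

lemma theta_pow_Un: "theta_pow p (A \<union> B) = theta_pow p A \<union> theta_pow p B"
  by (induction p) (simp_all add: theta_pow_def theta_pow_Suc[unfolded theta_pow_def] theta_set_Un)

lemma theta_pow_Suc_a:
  "theta_pow (Suc p) {[a]} =
     setcat (theta_pow p {[a]}) (theta_pow p {[b]}) \<union> setcat (theta_pow p {[b]}) (theta_pow p {[a]})"
proof -
  have "theta_set {[a]} = setcat {[a]} {[b]} \<union> setcat {[b]} {[a]}"
    unfolding theta_set_def by (auto simp: setcat_def)
  then show ?thesis by (simp add: theta_pow_Suc_right theta_pow_Un theta_pow_setcat)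
qed

lemma theta_pow_Suc_b: "theta_pow (Suc p) {[b]} = theta_pow p {[a]}"
proof -
  have "theta_set {[b]} = {[a]}"
    unfolding theta_set_def by (auto simp: setcat_def)
  then show ?thesis by (simp add: theta_pow_Suc_right)
qed

lemma theta_word_theta_pow_b: "y \<in> theta_pow p {[b]} \<Longrightarrow> w \<in> theta_word y \<Longrightarrow> w \<in> theta_pow p {[a]}"
  using theta_pow_SucI theta_pow_Suc_b by blast

text \<open>Both splittings are needed in the induction: each case of \<open>theta_pow_Suc_a\<close> uses the
other one for one of its factors.\<close>

lemma theta_word_theta_pow_a_split:
  assumes "v \<in> theta_pow p {[a]}"
  shows "(\<exists>y z. y @ z \<in> theta_word v \<and> y \<in> theta_pow p {[b]} \<and> z \<in> theta_pow p {[a]})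
       \<and> (\<exists>y z. y @ z \<in> theta_word v \<and> y \<in> theta_pow p {[a]} \<and> z \<in> theta_pow p {[b]})"
  using assms
proof (induction p arbitrary: v)
  case 0
  then have "v = [a]" by (simp add: theta_pow_def)
  then show ?case by (auto simp: theta_pow_def setcat_def)
next
  case (Suc p)
  from Suc.prems[unfolded theta_pow_Suc_a] obtain s t where v: "v = s @ t" and
    st: "s \<in> theta_pow p {[a]} \<and> t \<in> theta_pow p {[b]} \<or> s \<in> theta_pow p {[b]} \<and> t \<in> theta_pow p {[a]}"
    unfolding setcat_def by blast
  have theta_v: "y @ z \<in> theta_word v" if "y \<in> theta_word s" "z \<in> theta_word t" for y z
    using that by (simp add: v theta_word_append setcat_memI)
  obtain s' t' where s': "s' \<in> theta_word s" and t': "t' \<in> theta_word t"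
    using ex_in_theta_word by blast
  from st show ?case
  proof
    assume s: "s \<in> theta_pow p {[a]} \<and> t \<in> theta_pow p {[b]}"
    then have t'_a: "t' \<in> theta_pow p {[a]}" using t' theta_word_theta_pow_b by blast
    obtain y z where yz: "y @ z \<in> theta_word s" "y \<in> theta_pow p {[a]}" "z \<in> theta_pow p {[b]}"
      using Suc.IH s by blast
    have "y @ (z @ t') \<in> theta_word v" "(y @ z) @ t' \<in> theta_word v"
      using theta_v[OF yz(1) t'] by simp_all
    moreover have "z @ t' \<in> theta_pow (Suc p) {[a]}" "y @ z \<in> theta_pow (Suc p) {[a]}"
      unfolding theta_pow_Suc_a using yz t'_a by (blast intro: setcat_memI)+
    moreover have "y \<in> theta_pow (Suc p) {[b]}" "t' \<in> theta_pow (Suc p) {[b]}"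
      using yz(2) t'_a by (simp_all add: theta_pow_Suc_b)
    ultimately show ?thesis by blast
  next
    assume s: "s \<in> theta_pow p {[b]} \<and> t \<in> theta_pow p {[a]}"
    then have s'_a: "s' \<in> theta_pow p {[a]}" using s' theta_word_theta_pow_b by blast
    obtain y z where yz: "y @ z \<in> theta_word t" "y \<in> theta_pow p {[b]}" "z \<in> theta_pow p {[a]}"
      using Suc.IH s by blast
    have "s' @ (y @ z) \<in> theta_word v" "(s' @ y) @ z \<in> theta_word v"
      using theta_v[OF s' yz(1)] by simp_all
    moreover have "y @ z \<in> theta_pow (Suc p) {[a]}" "s' @ y \<in> theta_pow (Suc p) {[a]}"
      unfolding theta_pow_Suc_a using yz s'_a by (blast intro: setcat_memI)+
    moreover have "s' \<in> theta_pow (Suc p) {[b]}" "z \<in> theta_pow (Suc p) {[b]}"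
      using s'_a yz(3) by (simp_all add: theta_pow_Suc_b)
    ultimately show ?thesis by blast
  qed
qed

lemma legal_sublist: "legal w \<Longrightarrow> sublist y w \<Longrightarrow> legal y"
  unfolding legal_def by (meson sublist_order.order_trans)

lemma legal_theta_word:
  assumes "legal w" "y \<in> theta_word w"
  shows "legal y"
proof -
  obtain k x V where V: "V \<in> theta_pow k {[x]}" "sublist w V"
    using assms(1) unfolding legal_def by blast
  then obtain l r where "V = l @ w @ r" by (auto simp: sublist_def)
  obtain l' r' where "l' \<in> theta_word l" "r' \<in> theta_word r" using ex_in_theta_word by blast
  then have "l' @ y @ r' \<in> theta_word V"
    using \<open>V = _\<close> assms(2) by (simp add: theta_word_append setcat_memI)
  then have "l' @ y @ r' \<in> theta_pow (Suc k) {[x]}" using theta_pow_SucI V(1) by blast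
  then show "legal y" unfolding legal_def by (metis sublist_appendI)
qed

lemma legal_theta_word_suffix_aba:
  assumes v: "v \<in> theta_pow p {[a]}" and e: "e = [a, b] \<or> e = [b, a]"
    and legal: "legal (v @ u @ e)"
  obtains z x where "z \<in> theta_pow p {[a]}" "x \<in> theta_word u" "legal (z @ x @ [a, b, a])"
proof -
  obtain y z where yz: "y @ z \<in> theta_word v" "z \<in> theta_pow p {[a]}"
    using conjunct1[OF theta_word_theta_pow_a_split[OF v]] by blast
  obtain x where x: "x \<in> theta_word u" using ex_in_theta_word by blast
  have "[a, b, a] \<in> theta_word e" using e by (auto simp: setcat_def)
  then have "(y @ z) @ x @ [a, b, a] \<in> theta_word (v @ u @ e)"
    unfolding theta_word_append using yz(1) x by (blast intro: setcat_memI)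
  then have "legal (y @ z @ x @ [a, b, a])" using legal legal_theta_word by fastforce
  then have "legal (z @ x @ [a, b, a])" by (rule legal_sublist) (simp add: sublist_appendI)
  then show thesis using that yz(2) x by blast
qed

theorem mainTheorem3:
  fixes p :: nat and u :: word
  assumes "(\<exists>w \<in> setcat (theta_pow p {[a]}) (setcat {u} {[a, b]}). legal w)
         \<or> (\<exists>w \<in> setcat (theta_pow p {[a]}) (setcat {u} {[b, a]}). legal w)"
  shows "(\<exists>w \<in> setcat (theta_pow p {[a]}) (setcat (theta_word u) {[a, b]}). legal w)
       \<and> (\<exists>w \<in> setcat (theta_pow p {[a]})
               (setcat (theta_word u) (setcat (theta_word [b]) {[b, a]})). legal w)"
proof -
  obtain v e where "v \<in> theta_pow p {[a]}" "e = [a, b] \<or> e = [b, a]" "legal (v @ u @ e)"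
    using assms unfolding setcat_def by blast
  then obtain z x where z: "z \<in> theta_pow p {[a]}" and x: "x \<in> theta_word u"
    and legal: "legal (z @ x @ [a, b, a])"
    by (rule legal_theta_word_suffix_aba)
  have "legal (z @ x @ [a, b])" "legal (z @ x @ [a] @ [b, a])"
    using legal by (auto elim!: legal_sublist intro: sublist_appendI[of _ z "[a]", simplified]
        sublist_appendI[of _ z "[]", simplified])
  moreover have "z @ x @ [a, b] \<in> setcat (theta_pow p {[a]}) (setcat (theta_word u) {[a, b]})"
    "z @ x @ [a] @ [b, a] \<in> setcat (theta_pow p {[a]})
        (setcat (theta_word u) (setcat (theta_word [b]) {[b, a]}))"
    using z x by (auto intro!: setcat_memI simp: setcat_def)
  ultimately show ?thesis by blast
qed

end
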